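(* Let $f\in C^\infty(\mathbb{R})$ be real-valued, let $a\in\mathbb{R}$ and $g=(aI+\frac{d}{dx})f$, i.e. $g=af+f'$. Then $D^-(N_g,m_g)\ge D^-(N_f,m_f)$. Moreover, for $N\ge2$ and real-valued $f\in C^{N-1}(\mathbb{R})$, the same inequality holds when $m_f$ is replaced by the multiplicity function of the zeros of $f$ of height at most $N$ and $m_g$ by the multiplicity function of the zeros of $g$ of height at most $N-1$.
   Context: For a function $h$, $N_h$ is its set of real zeros and $m_h(x)=\sup\{m:h^{(j)}(x)=0\text{ for }0\le j<m\}$ its multiplicity function. For $h\in C^{K-1}(\mathbb{R})$, the multiplicity function of zeros of height at most $K$ is $x\mapsto\max\{m\le K:h^{(j)}(x)=0\text{ for }0\le j<m\}$. $D^-(N,m)=\liminf_{r\to\infty}\inf_{x\in\mathbb{R}}\frac{1}{2r}\sum_{\lambda\in N\cap[x-r,x+r]}m(\lambda)$. *)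

theory Defs
  imports "HOL-Analysis.Analysis"
begin

abbreviation higher_deriv_real :: "nat \<Rightarrow> (real \<Rightarrow> real) \<Rightarrow> real \<Rightarrow> real" where
  "higher_deriv_real k h \<equiv> (deriv ^^ k) h"

definition Ck :: "nat \<Rightarrow> (real \<Rightarrow> real) \<Rightarrow> bool" where
  "Ck k h \<longleftrightarrow> (\<forall>j<k. \<forall>x. higher_deriv_real j h differentiable (at x))
              \<and> continuous_on UNIV (higher_deriv_real k h)"

definition Cinf :: "(real \<Rightarrow> real) \<Rightarrow> bool" where
  "Cinf h \<longleftrightarrow> (\<forall>k. Ck k h)"

definition zero_set :: "(real \<Rightarrow> real) \<Rightarrow> real set" where
  "zero_set h = {x. h x = 0}"

definition mult_fun :: "(real \<Rightarrow> real) \<Rightarrow> real \<Rightarrow> enat" where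
  "mult_fun h x = Sup {m::enat. \<forall>j::nat. enat j < m \<longrightarrow> higher_deriv_real j h x = 0}"

definition mult_fun_le :: "nat \<Rightarrow> (real \<Rightarrow> real) \<Rightarrow> real \<Rightarrow> enat" where
  "mult_fun_le K h x = enat (Max {m::nat. m \<le> K \<and> (\<forall>j<m. higher_deriv_real j h x = 0)})"

definition lower_density :: "real set \<Rightarrow> (real \<Rightarrow> enat) \<Rightarrow> ennreal" where
  "lower_density Z m = Liminf at_top (\<lambda>r::real. INF x::real.
      ennreal (1 / (2 * r)) * infsum (\<lambda>l. ennreal_of_enat (m l)) (Z \<inter> {x - r .. x + r}))"

end

theory Submission
  imports Defs
begin

(* Since a f + f' = exp (-a x) (exp (a x) f)', Rolle's theorem puts a zero of g = a f + f'
   strictly between any two zeros of f, so n zeros of f in a window yield n - 1 zeros of g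
   there, distinct from them. At a zero of f of multiplicity m the identity
   g^(j) = a f^(j) + f^(j+1) shows that g has multiplicity at least m - 1. Together, the
   weighted zero count of g on [x - r, x + r] is at least that of f minus 1, and this
   deficit contributes only 1 / (2 r) to the density. *)

lemma higher_deriv_cmult_add_deriv:
  fixes f :: "real \<Rightarrow> real"
  assumes "\<And>i x. i \<le> j \<Longrightarrow> (deriv ^^ i) f differentiable (at x)"
  shows "(deriv ^^ j) (\<lambda>x. a * f x + deriv f x) = (\<lambda>x. a * (deriv ^^ j) f x + (deriv ^^ Suc j) f x)"
  using assms
proof (induction j)
  case 0
  then show ?case by simp
next
  case (Suc j)
  have IH: "(deriv ^^ j) (\<lambda>x. a * f x + deriv f x) = (\<lambda>x. a * (deriv ^^ j) f x + (deriv ^^ Suc j) f x)"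
    using Suc by simp
  have DERIV_higher: "DERIV ((deriv ^^ i) f) x :> (deriv ^^ Suc i) f x" if "i \<le> Suc j" for i x
    using Suc.prems[OF that] DERIV_deriv_iff_real_differentiable by force
  have combination: "DERIV (\<lambda>x. a * (deriv ^^ j) f x + (deriv ^^ Suc j) f x) x
      :> a * (deriv ^^ Suc j) f x + (deriv ^^ Suc (Suc j)) f x" for x
    by (intro DERIV_add DERIV_cmult DERIV_higher) simp_all
  then show ?case
    unfolding funpow.simps(2) comp_apply IH by (intro ext DERIV_imp_deriv combination)
qed

lemma Rolle_cmult_add_deriv:
  fixes f :: "real \<Rightarrow> real"
  assumes "\<And>x. f differentiable (at x)" and "p < q" "f p = 0" "f q = 0"
  shows "\<exists>z. p < z \<and> z < q \<and> a * f z + deriv f z = 0"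
proof -
  define h where "h = (\<lambda>x. exp (a * x) * f x)"
  have h_deriv: "DERIV h x :> exp (a * x) * (a * f x + deriv f x)" for x
  proof -
    have "DERIV f x :> deriv f x"
      using assms(1) DERIV_deriv_iff_real_differentiable by blast
    then show ?thesis
      unfolding h_def by (auto intro!: derivative_eq_intros simp: algebra_simps)
  qed
  have "continuous_on {p..q} h"
    using h_deriv by (meson DERIV_isCont continuous_at_imp_continuous_on)
  moreover have "h p = h q"
    using assms by (simp add: h_def)
  moreover have "(h has_derivative (*) (exp (a * x) * (a * f x + deriv f x))) (at x)" for x
    using h_deriv[of x] unfolding has_field_derivative_def .
  ultimately obtain z where z: "p < z" "z < q"
      and "(*) (exp (a * z) * (a * f z + deriv f z)) = (\<lambda>v. 0)"
    using Rolle_deriv[of p q h "\<lambda>x. (*) (exp (a * x) * (a * f x + deriv f x))"] \<open>p < q\<close> by blast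
  then have "exp (a * z) * (a * f z + deriv f z) = 0"
    by (metis mult_1_right)
  then show ?thesis
    using z by auto
qed

lemma higher_derivs_cmult_add_deriv_vanish:
  fixes f :: "real \<Rightarrow> real"
  assumes "\<And>i x. i < n - 1 \<Longrightarrow> (deriv ^^ i) f differentiable (at x)"
    and "\<And>j. j < n \<Longrightarrow> (deriv ^^ j) f z = 0"
    and "j < n - 1"
  shows "(deriv ^^ j) (\<lambda>x. a * f x + deriv f x) z = 0"
proof -
  have "(deriv ^^ j) (\<lambda>x. a * f x + deriv f x) = (\<lambda>x. a * (deriv ^^ j) f x + (deriv ^^ Suc j) f x)"
    by (rule higher_deriv_cmult_add_deriv) (use assms(1,3) in auto)
  moreover have "j < n" "Suc j < n"
    using assms(3) by auto
  ultimately show ?thesis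
    using assms(2)[of j] assms(2)[of "Suc j"] by (simp del: funpow.simps)
qed

lemma enat_le_plus_one_if:
  fixes x y :: enat
  assumes "\<And>n. enat n \<le> x \<Longrightarrow> enat (n - 1) \<le> y"
  shows "x \<le> y + 1"
proof (cases x)
  case (enat n)
  then have "enat (n - 1) + 1 \<le> y + 1"
    using assms by (simp add: add_right_mono)
  then show ?thesis
    using enat by (cases n) (simp_all add: one_enat_def flip: zero_enat_def)
next
  case infinity
  then have "enat n \<le> y" for n
    using assms[of "Suc n"] by simp
  then have "y = \<infinity>"
    by (cases y) (metis Suc_n_not_le_n enat_ord_simps(1))
  then show ?thesis
    by simp
qed

lemma enat_le_mult_fun_iff:
  "enat n \<le> mult_fun h x \<longleftrightarrow> (\<forall>j<n. (deriv ^^ j) h x = 0)"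
proof
  assume n: "enat n \<le> mult_fun h x"
  show "\<forall>j<n. (deriv ^^ j) h x = 0"
  proof (intro allI impI)
    fix j assume "j < n"
    then have "enat j < mult_fun h x"
      using n by (meson enat_ord_simps(2) less_le_trans)
    then obtain m :: enat where "enat j < m" "\<forall>i. enat i < m \<longrightarrow> (deriv ^^ i) h x = 0"
      unfolding mult_fun_def less_Sup_iff by blast
    then show "(deriv ^^ j) h x = 0"
      by blast
  qed
qed (auto simp: mult_fun_def intro: Sup_upper)

lemma enat_le_mult_fun_le_iff:
  "enat n \<le> mult_fun_le K h x \<longleftrightarrow> n \<le> K \<and> (\<forall>j<n. (deriv ^^ j) h x = 0)"
proof -
  let ?S = "{m. m \<le> K \<and> (\<forall>j<m. (deriv ^^ j) h x = 0)}"
  have "finite ?S"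
    by (rule finite_subset[of _ "{..K}"]) auto
  moreover have "0 \<in> ?S"
    by simp
  ultimately have "n \<le> Max ?S \<longleftrightarrow> (\<exists>m\<in>?S. n \<le> m)"
    by (subst Max_ge_iff) auto
  also have "\<dots> \<longleftrightarrow> n \<le> K \<and> (\<forall>j<n. (deriv ^^ j) h x = 0)"
    by (auto intro: le_trans)
  finally show ?thesis
    by (simp add: mult_fun_le_def)
qed

lemma one_le_mult_fun_iff: "1 \<le> mult_fun h x \<longleftrightarrow> h x = 0"
  using enat_le_mult_fun_iff[of 1 h x] by (simp add: one_enat_def)

lemma one_le_mult_fun_le_iff: "K \<ge> 1 \<Longrightarrow> 1 \<le> mult_fun_le K h x \<longleftrightarrow> h x = 0"
  using enat_le_mult_fun_le_iff[of 1 K h x] by (simp add: one_enat_def)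

lemma mult_fun_cmult_add_deriv:
  fixes f :: "real \<Rightarrow> real"
  assumes "Cinf f"
  shows "mult_fun f z \<le> mult_fun (\<lambda>x. a * f x + deriv f x) z + 1"
proof (rule enat_le_plus_one_if)
  fix n assume "enat n \<le> mult_fun f z"
  moreover have "(deriv ^^ i) f differentiable (at x)" for i x
    using assms unfolding Cinf_def Ck_def by blast
  ultimately show "enat (n - 1) \<le> mult_fun (\<lambda>x. a * f x + deriv f x) z"
    unfolding enat_le_mult_fun_iff by (blast intro: higher_derivs_cmult_add_deriv_vanish)
qed

lemma mult_fun_le_cmult_add_deriv:
  fixes f :: "real \<Rightarrow> real"
  assumes "Ck (N - 1) f"
  shows "mult_fun_le N f z \<le> mult_fun_le (N - 1) (\<lambda>x. a * f x + deriv f x) z + 1"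
proof (rule enat_le_plus_one_if)
  fix n assume n: "enat n \<le> mult_fun_le N f z"
  have "(deriv ^^ i) f differentiable (at x)" if "i < n - 1" for i x
    using assms that n unfolding Ck_def enat_le_mult_fun_le_iff by auto
  with n show "enat (n - 1) \<le> mult_fun_le (N - 1) (\<lambda>x. a * f x + deriv f x) z"
    using higher_derivs_cmult_add_deriv_vanish[of n f z] unfolding enat_le_mult_fun_le_iff by auto
qed

lemma interlacing_zeros_cmult_add_deriv:
  fixes f :: "real \<Rightarrow> real"
  assumes diff: "\<And>x. f differentiable (at x)" and "finite F" and "\<forall>z\<in>F. f z = 0"
  shows "\<exists>X. finite X \<and> card F \<le> card X + 1 \<and>
     (\<forall>y\<in>X. a * f y + deriv f y = 0 \<and> y \<notin> F \<and> (\<exists>z1\<in>F. \<exists>z2\<in>F. z1 < y \<and> y < z2))"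
  using assms(2,3)
proof (induction F rule: finite_linorder_max_induct)
  case empty
  then show ?case by (intro exI[of _ "{}"]) auto
next
  case (insert b A)
  show ?case
  proof (cases "A = {}")
    case True
    then show ?thesis by (intro exI[of _ "{}"]) auto
  next
    case False
    from insert obtain X where X: "finite X" "card A \<le> card X + 1"
      "\<forall>y\<in>X. a * f y + deriv f y = 0 \<and> y \<notin> A \<and> (\<exists>z1\<in>A. \<exists>z2\<in>A. z1 < y \<and> y < z2)"
      by auto
    define m where "m = Max A"
    have "m \<in> A" "\<forall>z\<in>A. z \<le> m"
      using False insert.hyps(1) by (simp_all add: m_def)
    moreover have "m < b"
      using \<open>m \<in> A\<close> insert.hyps by auto
    moreover have "f m = 0" "f b = 0"
      using insert.prems \<open>m \<in> A\<close> by auto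
    ultimately obtain y where y: "m < y" "y < b" "a * f y + deriv f y = 0"
      using Rolle_cmult_add_deriv[OF diff] by blast
    have "y \<notin> X"
      using X(3) \<open>\<forall>z\<in>A. z \<le> m\<close> y(1) by fastforce
    moreover have "b \<notin> A"
      using insert.hyps by auto
    moreover have "\<forall>w\<in>insert y X. a * f w + deriv f w = 0 \<and> w \<notin> insert b A
        \<and> (\<exists>z1\<in>insert b A. \<exists>z2\<in>insert b A. z1 < w \<and> w < z2)"
      using X(3) insert.hyps(2) y \<open>m \<in> A\<close> \<open>\<forall>z\<in>A. z \<le> m\<close> by fastforce
    ultimately show ?thesis
      using X(1,2) insert.hyps(1) by (intro exI[of _ "insert y X"]) auto
  qed
qed

lemma infsum_mult_zeros_cmult_add_deriv_le:
  fixes f :: "real \<Rightarrow> real" and a :: real and mf mg :: "real \<Rightarrow> enat"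
  defines "g \<equiv> \<lambda>x. a * f x + deriv f x"
  assumes diff: "\<And>x. f differentiable (at x)"
    and mult_le: "\<And>z. f z = 0 \<Longrightarrow> mf z \<le> mg z + 1"
    and one_le_mult: "\<And>z. 1 \<le> mg z \<longleftrightarrow> g z = 0"
  shows "infsum (\<lambda>l. ennreal_of_enat (mf l)) (zero_set f \<inter> {u..v})
     \<le> infsum (\<lambda>l. ennreal_of_enat (mg l)) (zero_set g \<inter> {u..v}) + 1"
proof (rule infsum_le_finite_sums)
  let ?mf = "\<lambda>l. ennreal_of_enat (mf l)" and ?mg = "\<lambda>l. ennreal_of_enat (mg l)"
  show "?mf summable_on zero_set f \<inter> {u..v}"
    by simp
  fix F assume F: "finite F" "F \<subseteq> zero_set f \<inter> {u..v}"
  then have f_F: "\<forall>z\<in>F. f z = 0"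
    by (auto simp: zero_set_def)
  obtain X where X: "finite X" "card F \<le> card X + 1"
     "\<forall>y\<in>X. g y = 0 \<and> y \<notin> F \<and> (\<exists>z1\<in>F. \<exists>z2\<in>F. z1 < y \<and> y < z2)"
    using interlacing_zeros_cmult_add_deriv[OF diff F(1) f_F, of a] unfolding g_def by blast
  have "X \<subseteq> {u..v}"
    using X(3) F(2) by fastforce
  have mg_outside: "mg z = 0" if "g z \<noteq> 0" for z
    using one_le_mult[of z] that by (cases "mg z") (auto simp: one_enat_def zero_enat_def)
  have "sum ?mf F \<le> sum (\<lambda>z. ?mg z + 1) F"
    using mult_le f_F
    by (intro sum_mono) (metis ennreal_of_enat_1 ennreal_of_enat_le_iff ennreal_of_enat_plus)
  also have "\<dots> = sum ?mg F + of_nat (card F)"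
    by (simp add: sum.distrib)
  also have "\<dots> \<le> sum ?mg F + (sum ?mg X + 1)"
  proof -
    have "of_nat (card F) \<le> (of_nat (card X) + 1 :: ennreal)"
      using X(2) by (metis of_nat_Suc of_nat_le_iff add.commute plus_1_eq_Suc)
    also have "of_nat (card X) = sum (\<lambda>_. 1::ennreal) X"
      by simp
    also have "\<dots> \<le> sum ?mg X"
      using one_le_mult X(3) by (intro sum_mono) (metis ennreal_of_enat_1 ennreal_of_enat_le_iff)
    finally show ?thesis
      by (intro add_left_mono) (simp add: add_right_mono)
  qed
  also have "\<dots> = sum ?mg ((F \<union> X) \<inter> zero_set g) + 1"
  proof -
    have "sum ?mg F + sum ?mg X = sum ?mg (F \<union> X)"
      using F(1) X by (intro sum.union_disjoint[symmetric]) auto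
    also have "\<dots> = sum ?mg ((F \<union> X) \<inter> zero_set g)"
      using F(1) X(1) mg_outside by (intro sum.mono_neutral_right) (auto simp: zero_set_def, (metis ennreal_of_enat_0)+)
    finally show ?thesis
      by (simp add: add.assoc)
  qed
  also have "sum ?mg ((F \<union> X) \<inter> zero_set g) \<le> infsum ?mg (zero_set g \<inter> {u..v})"
    unfolding nonneg_infsum_complete[OF zero_le]
    using F X \<open>X \<subseteq> {u..v}\<close> by (intro SUP_upper) auto
  finally show "sum ?mf F \<le> infsum ?mg (zero_set g \<inter> {u..v}) + 1"
    by (simp add: add_right_mono)
qed

lemma INF_add_const_ennreal:
  fixes f :: "'a \<Rightarrow> ennreal"
  shows "(INF i. f i + c) = (INF i. f i) + c"
  using continuous_at_Inf_mono[of "\<lambda>x. x + c" "range f"]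
  using continuous_add[of "at_right (Inf (range f))", of "\<lambda>x. x" "\<lambda>x. c"]
  by (auto simp: mono_def image_comp)

lemma lower_density_le_if_window_sums_le:
  fixes Zf Zg :: "real set" and mf mg :: "real \<Rightarrow> enat" and c :: real
  assumes window: "\<And>x r. r > 0 \<Longrightarrow> infsum (\<lambda>l. ennreal_of_enat (mf l)) (Zf \<inter> {x - r .. x + r})
     \<le> infsum (\<lambda>l. ennreal_of_enat (mg l)) (Zg \<inter> {x - r .. x + r}) + ennreal c"
  shows "lower_density Zf mf \<le> lower_density Zg mg"
proof -
  define Sf where "Sf x r = infsum (\<lambda>l. ennreal_of_enat (mf l)) (Zf \<inter> {x - r .. x + r})" for x r
  define Sg where "Sg x r = infsum (\<lambda>l. ennreal_of_enat (mg l)) (Zg \<inter> {x - r .. x + r})" for x r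
  define Pf where "Pf r = (INF x. ennreal (1 / (2 * r)) * Sf x r)" for r
  define Pg where "Pg r = (INF x. ennreal (1 / (2 * r)) * Sg x r)" for r
  have "Liminf at_top Pf \<le> Liminf at_top Pg + ennreal e" if "e > 0" for e
  proof -
    have "Pf r \<le> Pg r + ennreal e" if r: "r \<ge> (\<bar>c\<bar> + 1) / e" for r
    proof -
      have "r > 0"
        using r \<open>e > 0\<close> by (smt (verit) divide_pos_pos)
      then have "c / (2 * r) \<le> e"
        using r \<open>e > 0\<close> by (simp add: field_simps)
      have "Pf r \<le> ennreal (1 / (2 * r)) * Sg x r + ennreal e" for x
      proof -
        have "Pf r \<le> ennreal (1 / (2 * r)) * Sf x r"
          unfolding Pf_def by (rule INF_lower) simp
        also have "\<dots> \<le> ennreal (1 / (2 * r)) * (Sg x r + ennreal c)"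
          using window[OF \<open>r > 0\<close>] unfolding Sf_def Sg_def by (intro mult_left_mono) auto
        also have "\<dots> = ennreal (1 / (2 * r)) * Sg x r + ennreal (c / (2 * r))"
          using ennreal_mult'[of "1 / (2 * r)" c] \<open>r > 0\<close> by (simp add: distrib_left)
        also have "\<dots> \<le> ennreal (1 / (2 * r)) * Sg x r + ennreal e"
          using \<open>c / (2 * r) \<le> e\<close> by (intro add_left_mono ennreal_leI)
        finally show ?thesis .
      qed
      then have "Pf r \<le> (INF x. ennreal (1 / (2 * r)) * Sg x r + ennreal e)"
        by (rule INF_greatest)
      also have "\<dots> = Pg r + ennreal e"
        unfolding Pg_def by (rule INF_add_const_ennreal)
      finally show ?thesis .
    qed
    then have "Liminf at_top Pf \<le> Liminf at_top (\<lambda>r. Pg r + ennreal e)"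
      by (intro Liminf_mono) (auto simp: eventually_at_top_linorder)
    also have "\<dots> = Liminf at_top Pg + ennreal e"
      by (rule Liminf_add_const) simp
    finally show ?thesis .
  qed
  then have "Liminf at_top Pf \<le> Liminf at_top Pg"
    by (rule ennreal_le_epsilon)
  then show ?thesis
    unfolding lower_density_def Pf_def Pg_def Sf_def Sg_def .
qed

lemma lower_density_zeros_cmult_add_deriv:
  fixes f :: "real \<Rightarrow> real" and a :: real and mf mg :: "real \<Rightarrow> enat"
  defines "g \<equiv> \<lambda>x. a * f x + deriv f x"
  assumes "\<And>x. f differentiable (at x)"
    and "\<And>z. f z = 0 \<Longrightarrow> mf z \<le> mg z + 1"
    and "\<And>z. 1 \<le> mg z \<longleftrightarrow> g z = 0"
  shows "lower_density (zero_set f) mf \<le> lower_density (zero_set g) mg"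
  using infsum_mult_zeros_cmult_add_deriv_le[of f mf mg a] assms
  by (intro lower_density_le_if_window_sums_le[where c = 1]) simp_all

theorem lemma4p8:
  shows "(\<forall>(f::real \<Rightarrow> real) (a::real).
            Cinf f \<longrightarrow>
            (let g = (\<lambda>x. a * f x + deriv f x) in
             lower_density (zero_set g) (mult_fun g) \<ge> lower_density (zero_set f) (mult_fun f)))
       \<and> (\<forall>(N::nat) (f::real \<Rightarrow> real) (a::real).
            N \<ge> 2 \<longrightarrow> Ck (N - 1) f \<longrightarrow>
            (let g = (\<lambda>x. a * f x + deriv f x) in
             lower_density (zero_set g) (mult_fun_le (N - 1) g)
               \<ge> lower_density (zero_set f) (mult_fun_le N f)))"
proof (intro conjI allI impI, unfold Let_def)
  fix f :: "real \<Rightarrow> real" and a :: real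
  assume "Cinf f"
  then have "f differentiable (at x)" for x
    unfolding Cinf_def Ck_def by (metis funpow_0 zero_less_one)
  with \<open>Cinf f\<close> show "lower_density (zero_set (\<lambda>x. a * f x + deriv f x)) (mult_fun (\<lambda>x. a * f x + deriv f x))
      \<ge> lower_density (zero_set f) (mult_fun f)"
    by (intro lower_density_zeros_cmult_add_deriv mult_fun_cmult_add_deriv one_le_mult_fun_iff)
next
  fix N :: nat and f :: "real \<Rightarrow> real" and a :: real
  assume "N \<ge> 2" "Ck (N - 1) f"
  moreover have "0 < N - 1"
    using \<open>N \<ge> 2\<close> by simp
  ultimately have "f differentiable (at x)" for x
    unfolding Ck_def by (metis funpow_0)
  with \<open>N \<ge> 2\<close> \<open>Ck (N - 1) f\<close>
  show "lower_density (zero_set (\<lambda>x. a * f x + deriv f x)) (mult_fun_le (N - 1) (\<lambda>x. a * f x + deriv f x))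
      \<ge> lower_density (zero_set f) (mult_fun_le N f)"
    by (intro lower_density_zeros_cmult_add_deriv mult_fun_le_cmult_add_deriv one_le_mult_fun_le_iff) simp_all
qed

end
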